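(* The Leftmost and Median mechanisms have unbounded approximation ratio of the Nash welfare, while the MidOrNearest mechanism $2$-approximates the Nash welfare.
   Context: One facility is located on $[0,1]$; $n\ge1$ agents (any $n$) have locations $x_1\le\dots\le x_n$ in $[0,1]$. For a facility at $y$, agent $i$ has utility $u_i=1-|x_i-y|$. The Nash welfare is $\left(\prod_{i=1}^n u_i\right)^{1/n}$. The Leftmost mechanism locates the facility at $x_1$; the Median mechanism at $x_{\lceil n/2\rceil}$; the MidOrNearest mechanism at $x_n$ if $x_n<1/2$, at $1/2$ if $x_1\le1/2\le x_n$, and at $x_1$ if $x_1>1/2$. For a mechanism $M$, the approximation ratio of the Nash welfare is the supremum over all profiles $x$ (all numbers of agents) of $\mathrm{OPT}(x)/\mathrm{NW}(M(x))$, where $\mathrm{OPT}(x)$ is the maximum Nash welfare over facility locations in $[0,1]$ (the ratio is $+\infty$ if $\mathrm{NW}(M(x))=0$); $M$ "$\alpha$-approximates" the Nash welfare if this ratio equals $\alpha$. *)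

theory Defs
  imports Complex_Main "HOL-Library.Extended_Real"
begin

definition valid_profile :: "real list \<Rightarrow> bool" where
  "valid_profile xs \<longleftrightarrow> xs \<noteq> [] \<and> sorted xs \<and> set xs \<subseteq> {0..1}"

definition utility :: "real \<Rightarrow> real \<Rightarrow> real" where
  "utility x y = 1 - \<bar>x - y\<bar>"

definition nash_welfare :: "real list \<Rightarrow> real \<Rightarrow> real" where
  "nash_welfare xs y = root (length xs) (prod_list (map (\<lambda>x. utility x y) xs))"

definition opt_nw :: "real list \<Rightarrow> real" where
  "opt_nw xs = Sup (nash_welfare xs ` {0..1})"

text \<open>Mechanisms (on sorted lists; index is 0-based).\<close>
definition leftmost :: "real list \<Rightarrow> real" where
  "leftmost xs = hd xs"

definition median :: "real list \<Rightarrow> real" where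
  "median xs = xs ! ((length xs + 1) div 2 - 1)"

definition mid_or_nearest :: "real list \<Rightarrow> real" where
  "mid_or_nearest xs =
     (if last xs < 1/2 then last xs
      else if hd xs \<le> 1/2 \<and> 1/2 \<le> last xs then 1/2
      else hd xs)"

definition ratio_at :: "(real list \<Rightarrow> real) \<Rightarrow> real list \<Rightarrow> ereal" where
  "ratio_at M xs =
     (if nash_welfare xs (M xs) = 0 then \<infinity>
      else ereal (opt_nw xs / nash_welfare xs (M xs)))"

definition approx_ratio :: "(real list \<Rightarrow> real) \<Rightarrow> ereal" where
  "approx_ratio M = (SUP xs \<in> {xs. valid_profile xs}. ratio_at M xs)"

end

theory Submission
  imports Defs
begin

text \<open>Every agent's utility lies in [0,1], so both welfares are at most 1 and the
  ratio is infinite as soon as some agent gets utility 0; this happens for the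
  profile [0,1] under Leftmost and Median, which both place the facility at 0.
  MidOrNearest always lies within distance 1/2 of every agent, so its Nash welfare
  is at least 1/2 and its ratio at most 2. The bound is approached by one agent
  at 0 and m agents at 1: MidOrNearest chooses 1/2 with welfare 1/2, while the
  location 1 - 1/(2(m+1)) has welfare at least (1/(4(m+1)))^(1/(m+1)),
  which tends to 1.\<close>

lemma power_length_le_prod_list:
  fixes f :: "'a \<Rightarrow> 'b :: linordered_semidom"
  assumes "0 \<le> a" "\<And>x. x \<in> set xs \<Longrightarrow> a \<le> f x"
  shows "a ^ length xs \<le> prod_list (map f xs)"
  using assms
proof (induction xs)
  case (Cons y ys)
  then have "a \<le> f y" "a ^ length ys \<le> prod_list (map f ys)"
    by simp_all
  then show ?case
    using Cons.prems(1) by (simp add: mult_mono)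
qed simp

lemma prod_list_le_one:
  fixes f :: "'a \<Rightarrow> 'b :: linordered_semidom"
  assumes "\<And>x. x \<in> set xs \<Longrightarrow> 0 \<le> f x \<and> f x \<le> 1"
  shows "prod_list (map f xs) \<le> 1"
  using assms
proof (induction xs)
  case (Cons y ys)
  have "0 \<le> prod_list (map f ys)"
    using Cons.prems by (intro prod_list_nonneg) auto
  with Cons show ?case
    by (simp add: mult_le_one)
qed simp

lemma sorted_hd_le: "sorted xs \<Longrightarrow> x \<in> set xs \<Longrightarrow> hd xs \<le> x"
  by (cases xs) auto

lemma sorted_le_last: "sorted xs \<Longrightarrow> x \<in> set xs \<Longrightarrow> x \<le> last xs"
  by (induction xs) (auto simp: last_in_set)

lemma nash_welfare_le_one:
  assumes "valid_profile xs" "y \<in> {0..1}"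
  shows "nash_welfare xs y \<le> 1"
proof -
  have "prod_list (map (\<lambda>x. utility x y) xs) \<le> 1"
  proof (rule prod_list_le_one)
    fix x assume "x \<in> set xs"
    then have "x \<in> {0..1}"
      using assms(1) by (auto simp: valid_profile_def)
    then show "0 \<le> utility x y \<and> utility x y \<le> 1"
      using assms(2) by (auto simp: utility_def)
  qed
  moreover have "0 < length xs"
    using assms by (simp add: valid_profile_def)
  ultimately show ?thesis
    unfolding nash_welfare_def by (metis real_root_le_iff real_root_one)
qed

lemma opt_nw_le_one: "valid_profile xs \<Longrightarrow> opt_nw xs \<le> 1"
  unfolding opt_nw_def by (rule cSup_least) (auto simp: nash_welfare_le_one)

lemma nash_welfare_le_opt_nw:
  assumes "valid_profile xs" "y \<in> {0..1}"
  shows "nash_welfare xs y \<le> opt_nw xs"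
  unfolding opt_nw_def
proof (rule cSup_upper)
  show "bdd_above (nash_welfare xs ` {0..1})"
    using nash_welfare_le_one[OF assms(1)] by (auto intro!: bdd_aboveI[of _ 1])
qed (use assms in auto)

lemma ratio_at_le_approx_ratio: "valid_profile xs \<Longrightarrow> ratio_at M xs \<le> approx_ratio M"
  unfolding approx_ratio_def by (rule SUP_upper) simp

lemma approx_ratio_infinite_if_zero_welfare:
  assumes "valid_profile xs" "nash_welfare xs (M xs) = 0"
  shows "approx_ratio M = \<infinity>"
  using ratio_at_le_approx_ratio[OF assms(1), of M] assms(2)
  by (simp add: ratio_at_def)

lemma approx_ratio_infinite_if_at_zero:
  assumes "M [0, 1] = 0"
  shows "approx_ratio M = \<infinity>"
  by (rule approx_ratio_infinite_if_zero_welfare[of "[0, 1]"])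
    (simp_all add: valid_profile_def nash_welfare_def utility_def assms)

lemma utility_mid_or_nearest_ge_half:
  assumes "valid_profile xs" "x \<in> set xs"
  shows "1/2 \<le> utility x (mid_or_nearest xs)"
proof -
  have sorted: "sorted xs" and range: "set xs \<subseteq> {0..1}" and nonempty: "xs \<noteq> []"
    using assms(1) by (auto simp: valid_profile_def)
  have "hd xs \<le> x" "x \<le> last xs"
    using sorted_hd_le[OF sorted assms(2)] sorted_le_last[OF sorted assms(2)] by auto
  moreover have "x \<in> {0..1}" "hd xs \<in> {0..1}" "last xs \<in> {0..1}"
    using range assms(2) hd_in_set[OF nonempty] last_in_set[OF nonempty] by blast+
  ultimately show ?thesis
    unfolding mid_or_nearest_def utility_def by (auto split: if_splits abs_split)
qed

lemma nash_welfare_mid_or_nearest_ge_half: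
  assumes "valid_profile xs"
  shows "1/2 \<le> nash_welfare xs (mid_or_nearest xs)"
proof -
  have n: "0 < length xs"
    using assms by (simp add: valid_profile_def)
  have "(1/2) ^ length xs \<le> prod_list (map (\<lambda>x. utility x (mid_or_nearest xs)) xs)"
    by (rule power_length_le_prod_list) (use utility_mid_or_nearest_ge_half[OF assms] in auto)
  then have "root (length xs) ((1/2) ^ length xs) \<le> nash_welfare xs (mid_or_nearest xs)"
    unfolding nash_welfare_def using n by simp
  then show ?thesis
    using real_root_power_cancel[OF n, of "1/2"] by simp
qed

lemma approx_ratio_mid_or_nearest_le_2: "approx_ratio mid_or_nearest \<le> 2"
  unfolding approx_ratio_def
proof (rule SUP_least)
  fix xs assume "xs \<in> {xs. valid_profile xs}"
  then have "valid_profile xs"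
    by simp
  then have half: "1/2 \<le> nash_welfare xs (mid_or_nearest xs)" and "opt_nw xs \<le> 1"
    by (rule nash_welfare_mid_or_nearest_ge_half, rule opt_nw_le_one)
  then have "opt_nw xs / nash_welfare xs (mid_or_nearest xs) \<le> 2"
    by (simp add: divide_le_eq)
  then show "ratio_at mid_or_nearest xs \<le> 2"
    unfolding ratio_at_def using half by simp
qed

lemma LIMSEQ_root_inverse_linear: "(\<lambda>k. root (Suc k) (1 / (4 * real (Suc k)))) \<longlonglongrightarrow> 1"
proof -
  have "(\<lambda>k. root k (1/4) / root k (real k)) \<longlonglongrightarrow> 1 / 1"
    by (intro tendsto_divide LIMSEQ_root_const LIMSEQ_root) auto
  then have "(\<lambda>k. root k (1 / (4 * real k))) \<longlonglongrightarrow> 1"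
    by (simp add: real_root_divide[symmetric])
  then show ?thesis
    by (rule LIMSEQ_Suc)
qed

definition lone_left_profile :: "nat \<Rightarrow> real list" where
  "lone_left_profile m = 0 # replicate m 1"

lemma valid_lone_left_profile: "valid_profile (lone_left_profile m)"
  by (auto simp: lone_left_profile_def valid_profile_def)

lemma mid_or_nearest_lone_left_profile:
  "0 < m \<Longrightarrow> mid_or_nearest (lone_left_profile m) = 1/2"
  by (cases m) (auto simp: lone_left_profile_def mid_or_nearest_def)

lemma nash_welfare_lone_left_profile_half: "nash_welfare (lone_left_profile m) (1/2) = 1/2"
proof -
  have "prod_list (map (\<lambda>x. utility x (1/2)) (lone_left_profile m)) = (1/2) ^ Suc m"
    by (simp add: lone_left_profile_def utility_def prod_list_replicate)
  then show ?thesis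
    unfolding nash_welfare_def using real_root_power_cancel[of "Suc m" "1/2"]
    by (simp add: lone_left_profile_def del: power_Suc)
qed

lemma opt_nw_lone_left_profile_ge:
  "root (Suc m) (1 / (4 * real (Suc m))) \<le> opt_nw (lone_left_profile m)"
proof -
  define d where "d = 1 / (2 * real (Suc m))"
  have d: "0 < d" "d \<le> 1/2" "real m * d \<le> 1/2"
    unfolding d_def by (auto simp: field_simps)
  have "1 + real m * (- d) \<le> (1 + - d) ^ m"
    by (rule Bernoulli_inequality) (use d in auto)
  then have "d * (1/2) \<le> d * (1 - d) ^ m"
    using d by (intro mult_left_mono) auto
  then have "1 / (4 * real (Suc m)) \<le> d * (1 - d) ^ m"
    by (simp add: d_def)
  moreover have "prod_list (map (\<lambda>x. utility x (1 - d)) (lone_left_profile m)) = d * (1 - d) ^ m"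
    using d by (simp add: lone_left_profile_def utility_def prod_list_replicate)
  ultimately have "root (Suc m) (1 / (4 * real (Suc m))) \<le> nash_welfare (lone_left_profile m) (1 - d)"
    unfolding nash_welfare_def by (simp add: lone_left_profile_def)
  also have "\<dots> \<le> opt_nw (lone_left_profile m)"
    by (rule nash_welfare_le_opt_nw[OF valid_lone_left_profile]) (use d in auto)
  finally show ?thesis .
qed

lemma approx_ratio_mid_or_nearest_ge_2: "2 \<le> approx_ratio mid_or_nearest"
proof (rule dense_le)
  fix z :: ereal assume "z < 2"
  then obtain r where z: "z < ereal r" and "ereal r < 2"
    using ereal_dense2 by blast
  then have "r / 2 < 1"
    by simp
  then have "\<forall>\<^sub>F m in sequentially. r / 2 < root (Suc m) (1 / (4 * real (Suc m))) \<and> 0 < m"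
    by (intro eventually_conj order_tendstoD(1)[OF LIMSEQ_root_inverse_linear] eventually_gt_at_top)
  then obtain m where "r / 2 < root (Suc m) (1 / (4 * real (Suc m)))" and m: "0 < m"
    using eventually_happens'[OF sequentially_bot] by blast
  then have "r / 2 < opt_nw (lone_left_profile m)"
    using opt_nw_lone_left_profile_ge[of m] by linarith
  then have "ereal r \<le> ratio_at mid_or_nearest (lone_left_profile m)"
    by (simp add: ratio_at_def m mid_or_nearest_lone_left_profile
        nash_welfare_lone_left_profile_half)
  also have "\<dots> \<le> approx_ratio mid_or_nearest"
    by (rule ratio_at_le_approx_ratio[OF valid_lone_left_profile])
  finally show "z \<le> approx_ratio mid_or_nearest"
    using z by simp
qed

theorem theorem11:
  shows "approx_ratio leftmost = \<infinity> \<and> approx_ratio median = \<infinity>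
         \<and> approx_ratio mid_or_nearest = 2"
  using approx_ratio_infinite_if_at_zero[of leftmost] approx_ratio_infinite_if_at_zero[of median]
    approx_ratio_mid_or_nearest_le_2 approx_ratio_mid_or_nearest_ge_2
  by (simp add: leftmost_def median_def)

end
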